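(* Let $s>0$, $r>4+2s$, $\Omega=[-r,r]$, and let $K:\mathbb{R}\to\mathbb{R}$ be bounded and even with ${\rm supp}(K_+)=[-2,2]$ and ${\rm supp}(K_-)=[-2-s,-2]\cup[2,2+s]$. Assume $K_+$ is nonincreasing on $(0,\infty)$ and $\int_0^2K_+(y)\,dy\ge1+\int_{\mathbb{R}}K_-(y)\,dy$. Let $$B_1=\{u\in L^2(\Omega):\ u(x)=1\text{ for }x>1,\ u(x)=-1\text{ for }x<-1,\ u\text{ odd and nondecreasing}\}.$$ Then the map $u\mapsto f(Tu)$ sends $B_1$ into $B_1$.
   Context: $K_+=\max(K,0)$ and $K_-=\max(-K,0)$ denote the positive and negative parts of $K$, so $K=K_+-K_-$. $f$ is the saturation function $f(x)=1$ for $x>1$, $f(x)=x$ for $x\in[-1,1]$, $f(x)=-1$ for $x<-1$. For $u\in L^2(\Omega)$, $Tu(x)=\int_{\mathbb{R}}K(x-y)\widetilde u(y)\,dy$ for $x\in\Omega$, where $\widetilde u$ is the extension of $u$ by $0$ outside $\Omega$. *)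

theory Defs
  imports "HOL-Analysis.Analysis"
begin

definition sat :: "real \<Rightarrow> real" where
  "sat x = (if x > 1 then 1 else if x < -1 then -1 else x)"

definition zext :: "real \<Rightarrow> (real \<Rightarrow> real) \<Rightarrow> real \<Rightarrow> real" where
  "zext r u y = (if y \<in> {-r..r} then u y else 0)"

definition Top :: "(real \<Rightarrow> real) \<Rightarrow> real \<Rightarrow> (real \<Rightarrow> real) \<Rightarrow> real \<Rightarrow> real" where
  "Top K r u x = (LINT y|lborel. K (x - y) * zext r u y)"

text \<open>The set B_1 (functions on Omega = [-r,r], given pointwise).\<close>
definition B1 :: "real \<Rightarrow> (real \<Rightarrow> real) set" where
  "B1 r = {u. (\<forall>x\<in>{-r..r}. x > 1 \<longrightarrow> u x = 1)
            \<and> (\<forall>x\<in>{-r..r}. x < -1 \<longrightarrow> u x = -1)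
            \<and> (\<forall>x\<in>{-r..r}. u (-x) = - u x)
            \<and> mono_on {-r..r} u}"

end

theory Submission imports Defs begin

text \<open>Write \<open>U\<close> for the zero extension of \<open>u \<in> B1 r\<close>; it is odd, bounded by \<open>1\<close>, equal to
  \<open>\<plusminus>1\<close> on \<open>\<plusminus>(1, r]\<close> and nondecreasing on \<open>[-r, r]\<close>, and \<open>T u\<close> inherits oddness from \<open>U\<close> and
  evenness of \<open>K\<close>. In the convolution form \<open>T u (x) = \<integral> K z U (x - z) dz\<close> with \<open>|x| \<le> 1\<close>,
  the negative part of \<open>K\<close> only sees the constant values \<open>\<plusminus>1\<close> of \<open>U\<close>, while the positive part
  sees \<open>U\<close> on \<open>[-3, 3]\<close>, where it is nondecreasing; so \<open>T u\<close> is nondecreasing on \<open>[-1, 1]\<close>.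
  For \<open>x > 1\<close>, oddness gives \<open>2 T u (x) = \<integral> (K (x - y) - K (x + y)) U y dy\<close>; since \<open>K\<^sub>+\<close> is
  even and decreasing away from \<open>0\<close>, the integrand dominates \<open>K\<^sub>+\<close> on the region where
  \<open>|U| = 1\<close> minus twice the mass of \<open>K\<^sub>-\<close>, and a rearrangement of \<open>K\<^sub>+\<close> shows that this region
  carries at least \<open>\<integral>\<^sub>0\<^sup>2 K\<^sub>+\<close>. The mass condition then yields \<open>T u (x) \<ge> 1\<close>, so the
  saturation \<open>f (T u)\<close> is again in \<open>B1\<close>.\<close>

lemma integrable_bounded_by_indicator:
  fixes f :: "real \<Rightarrow> real"
  assumes "f \<in> borel_measurable borel" "\<And>y. \<bar>f y\<bar> \<le> C * indicator {a..b} y"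
  shows "integrable lborel f"
proof (rule Bochner_Integration.integrable_bound[where f="\<lambda>y. C * indicator {a..b} y"])
  have "emeasure lborel {a..b} < \<infinity>"
    by (cases "a \<le> b") auto
  then show "integrable lborel (\<lambda>y. C * indicator {a..b} y)"
    by (intro integrable_mult_right integrable_real_indicator) auto
  show "f \<in> borel_measurable lborel" using assms(1) by simp
  show "AE x in lborel. norm (f x) \<le> norm (C * indicator {a..b} x)"
    using assms(2) by (auto intro!: AE_I2 order_trans[OF _ abs_ge_self])
qed

lemma lborel_integral_reflect:
  fixes f :: "real \<Rightarrow> real"
  shows "(\<integral>y. f (t - y) \<partial>lborel) = (\<integral>y. f y \<partial>lborel)"
  using lborel_integral_real_affine[where f=f and c="-1" and t=t] by simp

lemma lborel_integral_translate:
  fixes f :: "real \<Rightarrow> real"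
  shows "(\<integral>y. f (t + y) \<partial>lborel) = (\<integral>y. f y \<partial>lborel)"
  using lborel_integral_real_affine[where f=f and c=1 and t=t] by simp

text \<open>The interval \<open>[a, b)\<close> contains \<open>0\<close> and is at least as long as \<open>[0, c]\<close>; folding the part of
  \<open>[0, c]\<close> beyond \<open>b\<close> back across \<open>0\<close> only increases \<open>P\<close>.\<close>

lemma integral_even_decreasing_le_interval:
  fixes P :: "real \<Rightarrow> real"
  assumes P_meas[measurable]: "P \<in> borel_measurable borel" and P_bdd: "\<And>y. \<bar>P y\<bar> \<le> C"
    and P_nonneg: "\<And>y. 0 \<le> P y" and P_even: "\<And>y. P (-y) = P y"
    and P_decr: "\<And>x y. 0 < x \<Longrightarrow> x \<le> y \<Longrightarrow> P y \<le> P x"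
    and ab: "a \<le> 0" "0 < b" "a + c \<le> b"
  shows "(\<integral>z. indicator {0..c} z * P z \<partial>lborel) \<le> (\<integral>z. indicator {a..<b} z * P z \<partial>lborel)"
proof -
  have C_nonneg: "0 \<le> C" using P_bdd[of 0] by simp
  have int: "integrable lborel (\<lambda>z. indicator S z * P (t + z))"
    if "S \<in> sets borel" "S \<subseteq> {l..h}" for S l h t
  proof (rule integrable_bounded_by_indicator[where C=C and a=l and b=h])
    have [measurable]: "S \<in> sets borel" using that by simp
    show "(\<lambda>z. indicator S z * P (t + z)) \<in> borel_measurable borel" by measurable
    fix y show "\<bar>indicator S y * P (t + y)\<bar> \<le> C * indicator {l..h} y"
      using that P_bdd[of "t + y"] C_nonneg by (auto simp: indicator_def)
  qed
  have i1: "integrable lborel (\<lambda>z. indicator {0..c} z * P z)"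
    using int[of "{0..c}" 0 c 0] by simp
  have i2: "integrable lborel (\<lambda>z. indicator {0..<b} z * P z)"
    using int[of "{0..<b}" 0 b 0] by fastforce
  have i3: "integrable lborel (\<lambda>z. indicator {b<..c} z * P (z - b))"
    using int[of "{b<..c}" b c "-b"] by fastforce
  have i4: "integrable lborel (\<lambda>z. indicator {b-c..<0} z * P z)"
    using int[of "{b-c..<0}" "b-c" 0 0] by fastforce
  have i5: "integrable lborel (\<lambda>z. indicator {a..<b} z * P z)"
    using int[of "{a..<b}" a b 0] by fastforce
  have "(\<integral>z. indicator {0..c} z * P z \<partial>lborel) \<le>
      (\<integral>z. indicator {0..<b} z * P z + indicator {b<..c} z * P (z - b) \<partial>lborel)"
  proof (rule integral_mono_AE[OF i1 Bochner_Integration.integrable_add[OF i2 i3]])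
    show "AE z in lborel. indicator {0..c} z * P z
        \<le> indicator {0..<b} z * P z + indicator {b<..c} z * P (z - b)"
      using AE_lborel_singleton[of b]
      by eventually_elim
        (use P_nonneg P_decr ab in \<open>auto simp: indicator_def intro: add_nonneg_nonneg\<close>)
  qed
  also have "\<dots> = (\<integral>z. indicator {0..<b} z * P z \<partial>lborel)
      + (\<integral>z. indicator {b<..c} z * P (z - b) \<partial>lborel)"
    by (rule Bochner_Integration.integral_add[OF i2 i3])
  also have "(\<integral>z. indicator {b<..c} z * P (z - b) \<partial>lborel)
      = (\<integral>z. indicator {b-c..<0} z * P z \<partial>lborel)"
    by (subst lborel_integral_reflect[where t=b, symmetric])
      (auto simp: P_even indicator_def intro!: Bochner_Integration.integral_cong)
  also have "(\<integral>z. indicator {0..<b} z * P z \<partial>lborel) + (\<integral>z. indicator {b-c..<0} z * P z \<partial>lborel)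
      = (\<integral>z. indicator {0..<b} z * P z + indicator {b-c..<0} z * P z \<partial>lborel)"
    by (rule Bochner_Integration.integral_add[symmetric, OF i2 i4])
  also have "\<dots> \<le> (\<integral>z. indicator {a..<b} z * P z \<partial>lborel)"
    by (rule integral_mono[OF Bochner_Integration.integrable_add[OF i2 i4] i5])
      (use ab P_nonneg in \<open>auto simp: indicator_def\<close>)
  finally show ?thesis .
qed

lemma borel_measurable_zext:
  assumes "mono_on {-r..r} u"
  shows "zext r u \<in> borel_measurable borel"
proof -
  have "u \<in> borel_measurable (restrict_space borel {-r..r})"
    by (rule borel_measurable_mono_on_fnc[OF assms])
  then have "(\<lambda>x. indicator {-r..r} x *\<^sub>R u x) \<in> borel_measurable borel"
    by (subst (asm) borel_measurable_restrict_space_iff) auto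
  moreover have "(\<lambda>x. indicator {-r..r} x *\<^sub>R u x) = zext r u"
    by (auto simp: zext_def indicator_def fun_eq_iff)
  ultimately show ?thesis by simp
qed

lemma zext_odd:
  assumes "\<forall>y\<in>{-r..r}. u (-y) = - u y"
  shows "zext r u (-y) = - zext r u y"
  using assms by (auto simp: zext_def)

lemma zext_eq_1: "u \<in> B1 r \<Longrightarrow> 1 < y \<Longrightarrow> y \<le> r \<Longrightarrow> zext r u y = 1"
  by (auto simp: B1_def zext_def)

lemma zext_eq_minus_1: "u \<in> B1 r \<Longrightarrow> -r \<le> y \<Longrightarrow> y < -1 \<Longrightarrow> zext r u y = -1"
  by (auto simp: B1_def zext_def)

lemma zext_mono: "u \<in> B1 r \<Longrightarrow> -r \<le> a \<Longrightarrow> a \<le> b \<Longrightarrow> b \<le> r \<Longrightarrow> zext r u a \<le> zext r u b"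
  by (auto simp: B1_def zext_def intro: mono_onD)

lemma zext_nonneg:
  assumes u: "u \<in> B1 r" and y: "0 \<le> y"
  shows "0 \<le> zext r u y"
proof (cases "y \<le> r")
  case True
  have "zext r u 0 = 0" using zext_odd[of r u 0] u by (simp add: B1_def)
  then show ?thesis using zext_mono[OF u, of 0 y] True y by simp
qed (simp add: zext_def)

lemma zext_abs_le_indicator:
  assumes u: "u \<in> B1 r" and r: "1 < r"
  shows "\<bar>zext r u y\<bar> \<le> indicator {-r..r} y"
proof (cases "y \<in> {-r..r}")
  case True
  have "zext r u (-r) \<le> zext r u y" "zext r u y \<le> zext r u r"
    using True by (auto intro!: zext_mono[OF u])
  moreover have "zext r u r = 1" "zext r u (-r) = -1"
    using zext_eq_1[OF u] zext_eq_minus_1[OF u] r by auto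
  ultimately show ?thesis using True by simp
qed (auto simp: zext_def indicator_def)

lemma sat_comp_in_B1:
  fixes T :: "real \<Rightarrow> real"
  assumes T_odd: "\<And>x. T (-x) = - T x"
    and T_mono: "\<And>x y. -1 \<le> x \<Longrightarrow> x \<le> y \<Longrightarrow> y \<le> 1 \<Longrightarrow> T x \<le> T y"
    and T_ge_1: "\<And>x. 1 < x \<Longrightarrow> x \<le> r \<Longrightarrow> 1 \<le> T x"
  shows "(\<lambda>x. sat (T x)) \<in> B1 r"
proof -
  have T_le_minus_1: "T x \<le> -1" if "-r \<le> x" "x < -1" for x
    using T_ge_1[of "-x"] T_odd[of x] that by simp
  have "sat (T x) \<le> sat (T y)" if "x \<in> {-r..r}" "y \<in> {-r..r}" "x \<le> y" for x y
  proof (cases "1 < y \<or> x < -1")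
    case True
    then show ?thesis using that T_ge_1[of y] T_le_minus_1[of x] by (auto simp: sat_def)
  next
    case False
    then show ?thesis using that T_mono[of x y] by (auto simp: sat_def)
  qed
  then show ?thesis
    unfolding B1_def
  proof (intro CollectI conjI ballI impI mono_onI)
    show "sat (T x) = 1" if "x \<in> {-r..r}" "1 < x" for x
      using T_ge_1[of x] that by (simp add: sat_def)
    show "sat (T x) = -1" if "x \<in> {-r..r}" "x < -1" for x
      using T_le_minus_1[of x] that by (simp add: sat_def)
    show "sat (T (-x)) = - sat (T x)" for x
      using T_odd[of x] by (simp add: sat_def)
  qed auto
qed

lemma Top_odd:
  assumes K_even: "\<forall>x. K (-x) = K x" and u_odd: "\<forall>y\<in>{-r..r}. u (-y) = - u y"
  shows "Top K r u (-x) = - Top K r u x"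
proof -
  have "Top K r u (-x) = (\<integral>y. K (- x - (0 - y)) * zext r u (0 - y) \<partial>lborel)"
    unfolding Top_def by (rule lborel_integral_reflect[symmetric])
  also have "\<dots> = (\<integral>y. - (K (x - y) * zext r u y) \<partial>lborel)"
  proof -
    have "K (- x - (0 - y)) * zext r u (0 - y) = - (K (x - y) * zext r u y)" for y
      using K_even[rule_format, of "x - y"] zext_odd[OF u_odd, of y] by simp
    then show ?thesis by simp
  qed
  finally show ?thesis by (simp add: Top_def)
qed

lemma Top_eq_convolution: "Top K r u x = (\<integral>z. K z * zext r u (x - z) \<partial>lborel)"
  unfolding Top_def
  using lborel_integral_reflect[where t=x and f="\<lambda>z. K z * zext r u (x - z)"] by simp

locale sign_changing_kernel =
  fixes s :: real and K :: "real \<Rightarrow> real"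
  assumes s_pos: "s > 0"
    and K_meas: "K \<in> borel_measurable lborel"
    and K_bdd: "bounded (range K)"
    and K_even: "\<forall>x. K (- x) = K x"
    and supp_pos: "closure {y. max (K y) 0 \<noteq> 0} = {-2..2}"
    and supp_neg: "closure {y. max (- K y) 0 \<noteq> 0} = {-2-s..-2} \<union> {2..2+s}"
begin

abbreviation K_plus :: "real \<Rightarrow> real" where "K_plus y \<equiv> max (K y) 0"

abbreviation K_minus :: "real \<Rightarrow> real" where "K_minus y \<equiv> max (- K y) 0"

lemma K_measurable[measurable]: "K \<in> borel_measurable borel"
  using K_meas by simp

lemma K_bounded:
  obtains C where "0 \<le> C" "\<And>y. \<bar>K y\<bar> \<le> C"
  using K_bdd unfolding bounded_iff by (metis abs_ge_zero order_trans real_norm_def rangeI)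

lemma K_plus_eq_0: "2 < \<bar>y\<bar> \<Longrightarrow> K_plus y = 0"
  using supp_pos closure_subset[of "{y. K_plus y \<noteq> 0}"] by fastforce

lemma K_minus_eq_0: "\<bar>y\<bar> < 2 \<or> 2 + s < \<bar>y\<bar> \<Longrightarrow> K_minus y = 0"
  using supp_neg closure_subset[of "{y. K_minus y \<noteq> 0}"] by fastforce

lemma K_nonneg: "\<bar>y\<bar> < 2 \<Longrightarrow> 0 \<le> K y"
  using K_minus_eq_0[of y] by simp

lemma K_eq_0: "2 + s < \<bar>y\<bar> \<Longrightarrow> K y = 0"
  using K_plus_eq_0[of y] K_minus_eq_0[of y] s_pos by (simp add: max_def split: if_splits)

lemma K_split: "K y = K_plus y - K_minus y"
  by (simp add: max_def)

lemma integrable_K_minus: "integrable lborel K_minus"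
proof -
  obtain C where C: "0 \<le> C" "\<And>y. \<bar>K y\<bar> \<le> C" using K_bounded by blast
  show ?thesis
  proof (rule integrable_bounded_by_indicator[where C=C and a="-2-s" and b="2+s"])
    show "K_minus \<in> borel_measurable borel" by measurable
    show "\<bar>K_minus y\<bar> \<le> C * indicator {-2-s..2+s} y" for y
      by (cases "2 + s < \<bar>y\<bar>")
        (use C K_minus_eq_0[of y] in \<open>auto simp: indicator_def abs_le_iff\<close>)
  qed
qed

lemma integrable_indicator_mult_K_plus:
  assumes S: "S \<in> sets borel" "S \<subseteq> {a..b}"
  shows "integrable lborel (\<lambda>y. indicator S y * K_plus (t + c * y))"
proof -
  obtain C where C: "0 \<le> C" "\<And>y. \<bar>K y\<bar> \<le> C" using K_bounded by blast
  have [measurable]: "S \<in> sets borel" by (rule S(1))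
  show ?thesis
  proof (rule integrable_bounded_by_indicator[where C=C and a=a and b=b])
    show "(\<lambda>y. indicator S y * K_plus (t + c * y)) \<in> borel_measurable borel" by measurable
    show "\<bar>indicator S y * K_plus (t + c * y)\<bar> \<le> C * indicator {a..b} y" for y
      using S(2) C(1) C(2)[of "t + c * y"] by (auto simp: indicator_def)
  qed
qed

lemma integrable_K_mult_zext:
  assumes u: "u \<in> B1 r" and r: "1 < r"
  shows "integrable lborel (\<lambda>y. K (t + c * y) * zext r u y)"
proof -
  obtain C where C: "0 \<le> C" "\<And>y. \<bar>K y\<bar> \<le> C" using K_bounded by blast
  have [measurable]: "zext r u \<in> borel_measurable borel"
    using u by (intro borel_measurable_zext) (simp add: B1_def)
  show ?thesis
  proof (rule integrable_bounded_by_indicator[where C=C and a="-r" and b=r])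
    show "(\<lambda>y. K (t + c * y) * zext r u y) \<in> borel_measurable borel" by measurable
    show "\<bar>K (t + c * y) * zext r u y\<bar> \<le> C * indicator {-r..r} y" for y
      unfolding abs_mult by (intro mult_mono C zext_abs_le_indicator[OF u r]) (use C in auto)
  qed
qed

lemma Top_eq_symmetrized:
  assumes u: "u \<in> B1 r" and r: "1 < r"
  shows "2 * Top K r u x = (\<integral>y. (K (x - y) - K (x + y)) * zext r u y \<partial>lborel)"
proof -
  have "K (- x - y) = K (x + y)" for y
    using K_even[rule_format, of "x + y"] by simp
  then have "Top K r u x = - (\<integral>y. K (x + y) * zext r u y \<partial>lborel)"
    using Top_odd[of K r u "-x"] K_even u by (simp add: Top_def B1_def)
  then show ?thesis
    using integrable_K_mult_zext[OF u r, of x "-1"] integrable_K_mult_zext[OF u r, of x 1]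
    by (simp add: Top_def left_diff_distrib)
qed

lemma Top_mono:
  assumes u: "u \<in> B1 r" and r: "3 + s \<le> r" and xx': "-1 \<le> x" "x \<le> x'" "x' \<le> 1"
  shows "Top K r u x \<le> Top K r u x'"
proof -
  have r1: "1 < r" using r s_pos by simp
  have int: "integrable lborel (\<lambda>z. K z * zext r u (t - z))" for t
    using lborel_integrable_real_affine[OF integrable_K_mult_zext[OF u r1, of t "-1"], of "-1" t]
    by simp
  have "AE z in lborel. K z * zext r u (x - z) \<le> K z * zext r u (x' - z)"
    using AE_lborel_singleton[of 2] AE_lborel_singleton[of "-2"]
  proof eventually_elim
    case (elim z)
    consider "\<bar>z\<bar> < 2" | "2 + s < \<bar>z\<bar>" | "2 < z \<and> z \<le> 2 + s" | "-2 - s \<le> z \<and> z < -2"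
      using elim by linarith
    then show ?case
    proof cases
      case 1
      then show ?thesis
        using xx' r s_pos by (intro mult_left_mono[OF zext_mono[OF u] K_nonneg]) auto
    next
      case 2
      then show ?thesis by (simp add: K_eq_0)
    next
      case 3
      then show ?thesis using xx' r by (simp add: zext_eq_minus_1[OF u])
    next
      case 4
      then show ?thesis using xx' r by (simp add: zext_eq_1[OF u])
    qed
  qed
  then show ?thesis
    unfolding Top_eq_convolution by (rule integral_mono_AE[OF int int])
qed

end

locale admissible_kernel = sign_changing_kernel +
  assumes Kp_mono: "\<forall>x y. 0 < x \<longrightarrow> x \<le> y \<longrightarrow> max (K y) 0 \<le> max (K x) 0"
    and K_mass: "(LINT y:{0..2}|lborel. max (K y) 0) \<ge> 1 + (LINT y|lborel. max (- K y) 0)"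
begin

text \<open>For \<open>|y| \<le> 1 < x\<close>, \<open>U y \<ge> 0\<close> exactly when \<open>x - y\<close> is closer to \<open>0\<close> than \<open>x + y\<close>, so the
  monotonicity of \<open>K\<^sub>+\<close> gives \<open>K\<^sub>+ (x - y) - K\<^sub>+ (x + y)\<close> the sign of \<open>U y\<close>.\<close>

lemma K_plus_difference_zext_ge:
  assumes u: "u \<in> B1 r" and x: "1 < x" "x \<le> r"
  shows "indicator {1<..r} y * K_plus (x - y) + indicator {-r..<-1} y * K_plus (x + y)
      \<le> (K_plus (x - y) - K_plus (x + y)) * zext r u y"
proof -
  consider "1 < y" "y \<le> r" | "-r \<le> y" "y < -1" | "y < -r \<or> r < y" | "0 \<le> y" "y \<le> 1"
    | "-1 \<le> y" "y < 0"
    by linarith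
  then show ?thesis
  proof cases
    case 1
    then show ?thesis using x by (simp add: zext_eq_1[OF u] K_plus_eq_0)
  next
    case 2
    then show ?thesis using x by (simp add: zext_eq_minus_1[OF u] K_plus_eq_0)
  next
    case 3
    then show ?thesis using x by (auto simp: zext_def)
  next
    case 4
    have "K_plus (x + y) \<le> K_plus (x - y)"
      using Kp_mono[rule_format, of "x - y" "x + y"] 4 x
      by (cases "2 < x + y") (simp_all add: K_plus_eq_0)
    then show ?thesis using 4 zext_nonneg[OF u, of y] by simp
  next
    case 5
    have "K_plus (x - y) \<le> K_plus (x + y)"
      using Kp_mono[rule_format, of "x + y" "x - y"] 5 x
      by (cases "2 < x - y") (simp_all add: K_plus_eq_0)
    moreover have "zext r u y \<le> 0"
      using zext_nonneg[OF u, of "-y"] zext_odd[of r u y] u 5 by (simp add: B1_def)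
    ultimately show ?thesis using 5 by (simp add: mult_nonpos_nonpos)
  qed
qed

lemma K_difference_zext_ge:
  assumes u: "u \<in> B1 r" and x: "1 < x" "x \<le> r"
  shows "indicator {1<..r} y * K_plus (x - y) + indicator {-r..<-1} y * K_plus (x + y)
      - K_minus (x - y) - K_minus (x + y) \<le> (K (x - y) - K (x + y)) * zext r u y"
proof -
  have "\<bar>zext r u y\<bar> \<le> 1"
    using zext_abs_le_indicator[OF u, of y] x by (cases "y \<in> {-r..r}") simp_all
  then have "K_minus (x - y) * zext r u y \<le> K_minus (x - y)"
    and "- K_minus (x + y) \<le> K_minus (x + y) * zext r u y"
    using mult_left_mono[of "zext r u y" 1 "K_minus (x - y)"]
      mult_left_mono[of "-1" "zext r u y" "K_minus (x + y)"]
    by (auto simp: abs_le_iff)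
  moreover have "(K (x - y) - K (x + y)) * zext r u y
      = (K_plus (x - y) - K_plus (x + y)) * zext r u y
        - K_minus (x - y) * zext r u y + K_minus (x + y) * zext r u y"
    by (subst (1 2) K_split) (simp add: algebra_simps)
  ultimately show ?thesis
    using K_plus_difference_zext_ge[OF u x, of y] by linarith
qed

lemma Top_ge_1:
  assumes u: "u \<in> B1 r" and r: "3 \<le> r" and x: "1 < x" "x \<le> r"
  shows "1 \<le> Top K r u x"
proof -
  have r1: "1 < r" using r by simp
  obtain C where C: "0 \<le> C" "\<And>y. \<bar>K y\<bar> \<le> C" using K_bounded by blast
  have int_plus_right: "integrable lborel (\<lambda>y. indicator {1<..r} y * K_plus (x - y))"
    using integrable_indicator_mult_K_plus[where S="{1<..r}" and a=1 and b=r and t=x and c="-1"]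
    by fastforce
  have int_plus_left: "integrable lborel (\<lambda>y. indicator {-r..<-1} y * K_plus (x + y))"
    using integrable_indicator_mult_K_plus[where S="{-r..<-1}" and a="-r" and b="-1" and t=x and c=1]
    by fastforce
  have int_minus_right: "integrable lborel (\<lambda>y. K_minus (x - y))"
    using lborel_integrable_real_affine[OF integrable_K_minus, of "-1" x] by simp
  have int_minus_left: "integrable lborel (\<lambda>y. K_minus (x + y))"
    using lborel_integrable_real_affine[OF integrable_K_minus, of 1 x] by simp
  have int_K_U: "integrable lborel (\<lambda>y. (K (x - y) - K (x + y)) * zext r u y)"
    using integrable_K_mult_zext[OF u r1, of x "-1"] integrable_K_mult_zext[OF u r1, of x 1]
    by (simp add: left_diff_distrib)
  have plus_right_eq: "(\<integral>y. indicator {1<..r} y * K_plus (x - y) \<partial>lborel)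
      = (\<integral>z. indicator {x-r..<x-1} z * K_plus z \<partial>lborel)"
    by (subst lborel_integral_reflect[where t=x, symmetric])
      (auto simp: indicator_def intro!: Bochner_Integration.integral_cong)
  have plus_left_eq: "(\<integral>y. indicator {-r..<-1} y * K_plus (x + y) \<partial>lborel)
      = (\<integral>y. indicator {1<..r} y * K_plus (x - y) \<partial>lborel)"
    by (subst lborel_integral_reflect[where t=0, symmetric])
      (auto simp: indicator_def intro!: Bochner_Integration.integral_cong)
  have "2 * (\<integral>z. indicator {x-r..<x-1} z * K_plus z \<partial>lborel) - 2 * (\<integral>y. K_minus y \<partial>lborel)
      = (\<integral>y. indicator {1<..r} y * K_plus (x - y) + indicator {-r..<-1} y * K_plus (x + y)
          - K_minus (x - y) - K_minus (x + y) \<partial>lborel)"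
    using int_plus_right int_plus_left int_minus_right int_minus_left plus_right_eq plus_left_eq
      lborel_integral_reflect[of K_minus x] lborel_integral_translate[of K_minus x]
    by simp
  also have "\<dots> \<le> (\<integral>y. (K (x - y) - K (x + y)) * zext r u y \<partial>lborel)"
    using int_plus_right int_plus_left int_minus_right int_minus_left
    by (intro integral_mono int_K_U K_difference_zext_ge[OF u x]) auto
  also have "\<dots> = 2 * Top K r u x"
    using Top_eq_symmetrized[OF u r1] by simp
  finally have "(\<integral>z. indicator {x-r..<x-1} z * K_plus z \<partial>lborel) - (\<integral>y. K_minus y \<partial>lborel)
      \<le> Top K r u x"
    by simp
  moreover have "(\<integral>z. indicator {0..2} z * K_plus z \<partial>lborel)
      \<le> (\<integral>z. indicator {x-r..<x-1} z * K_plus z \<partial>lborel)"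
  proof (rule integral_even_decreasing_le_interval[where C=C])
    show "K_plus \<in> borel_measurable borel" by measurable
    show "\<bar>K_plus y\<bar> \<le> C" for y
      using C by (simp add: abs_le_iff)
    show "K_plus (- y) = K_plus y" for y
      using K_even by simp
    show "K_plus y \<le> K_plus z" if "0 < z" "z \<le> y" for y z
      using Kp_mono that by blast
  qed (use x r in auto)
  moreover have "1 + (\<integral>y. K_minus y \<partial>lborel) \<le> (\<integral>z. indicator {0..2} z * K_plus z \<partial>lborel)"
    using K_mass by (simp add: set_lebesgue_integral_def)
  ultimately show ?thesis by linarith
qed

end

theorem mainTheorem11:
  fixes s r :: real and K :: "real \<Rightarrow> real"
  assumes s_pos: "s > 0"
    and r_big: "r > 4 + 2 * s"
    and K_meas: "K \<in> borel_measurable lborel"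
    and K_bdd: "bounded (range K)"
    and K_even: "\<forall>x. K (- x) = K x"
    and supp_pos: "closure {y. max (K y) 0 \<noteq> 0} = {-2..2}"
    and supp_neg: "closure {y. max (- K y) 0 \<noteq> 0} = {-2-s..-2} \<union> {2..2+s}"
    and Kp_mono: "\<forall>x y. 0 < x \<longrightarrow> x \<le> y \<longrightarrow> max (K y) 0 \<le> max (K x) 0"
    and K_mass: "(LINT y:{0..2}|lborel. max (K y) 0) \<ge> 1 + (LINT y|lborel. max (- K y) 0)"
  shows "\<forall>u\<in>B1 r. (\<lambda>x. sat (Top K r u x)) \<in> B1 r"
proof
  interpret admissible_kernel s K
    by unfold_locales (fact s_pos K_meas K_bdd K_even supp_pos supp_neg Kp_mono K_mass)+
  fix u assume u: "u \<in> B1 r"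
  have u_odd: "\<forall>y\<in>{-r..r}. u (-y) = - u y"
    using u by (simp add: B1_def)
  have r_ge_3_plus_s: "3 + s \<le> r" and r_ge_3: "3 \<le> r"
    using r_big s_pos by simp_all
  show "(\<lambda>x. sat (Top K r u x)) \<in> B1 r"
  proof (rule sat_comp_in_B1)
    show "Top K r u (-x) = - Top K r u x" for x
      by (rule Top_odd[OF K_even u_odd])
    show "Top K r u x \<le> Top K r u y" if "-1 \<le> x" "x \<le> y" "y \<le> 1" for x y
      by (rule Top_mono[OF u r_ge_3_plus_s that])
    show "1 \<le> Top K r u x" if "1 < x" "x \<le> r" for x
      by (rule Top_ge_1[OF u r_ge_3 that])
  qed
qed

end
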